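(* Let $f$ be a critically coalescing quadratic rational map with critical values $v_1,v_2$, and let $k\ge2$. Then for $x\in\hat{\mathbb{C}}$, $x\in\mathcal{V}_f\cup\{f(v_1)\}$ if and only if $f^{-k}(x)\subseteq\mathcal{C}_{f^k}$.
   Context: A quadratic rational map $f$ with critical values $v_1\neq v_2$ is critically coalescing if $f(v_1)=f(v_2)$. $\mathcal{C}_h$, $\mathcal{V}_h$ denote the sets of critical points and critical values of $h$; $f^{-k}(x)$ is the full preimage of $x$ under the $k$-th iterate. *)

theory Defs
  imports "HOL-Analysis.Analysis" "HOL-Computational_Algebra.Polynomial"
begin

text \<open>The Riemann sphere is modelled as complex option: Some z is z, None is infinity.\<close>

type_synonym sphere = "complex option"

definition rat_map :: "complex poly \<Rightarrow> complex poly \<Rightarrow> sphere \<Rightarrow> sphere" where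
  "rat_map p q y = (case y of
      Some z \<Rightarrow> (if poly q z = 0 then None else Some (poly p z / poly q z))
    | None \<Rightarrow> (if degree p > degree q then None
               else Some (coeff p (degree q) / coeff q (degree q))))"

definition quadratic_rational_map :: "(sphere \<Rightarrow> sphere) \<Rightarrow> bool" where
  "quadratic_rational_map f \<longleftrightarrow>
     (\<exists>p q. q \<noteq> 0 \<and> coprime p q \<and> max (degree p) (degree q) = 2 \<and> f = rat_map p q)"

definition chart :: "sphere \<Rightarrow> sphere \<Rightarrow> complex" where
  "chart a y = (case a of
      None \<Rightarrow> (case y of None \<Rightarrow> 0 | Some w \<Rightarrow> 1 / w)
    | Some _ \<Rightarrow> (case y of None \<Rightarrow> 0 | Some w \<Rightarrow> w))"

definition chart_inv :: "sphere \<Rightarrow> complex \<Rightarrow> sphere" where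
  "chart_inv a w = (case a of
      None \<Rightarrow> (if w = 0 then None else Some (1 / w))
    | Some _ \<Rightarrow> Some w)"

definition crit_points :: "(sphere \<Rightarrow> sphere) \<Rightarrow> sphere set" where
  "crit_points g = {z. deriv (\<lambda>w. chart (g z) (g (chart_inv z w))) (chart z z) = 0}"

definition crit_values :: "(sphere \<Rightarrow> sphere) \<Rightarrow> sphere set" where
  "crit_values g = g ` crit_points g"

end

theory Submission
  imports Defs
begin

text \<open>
  Criticality on the sphere is multiplicative along compositions, so a point is critical for
  \<open>f^k\<close> exactly when one of its first \<open>k\<close> iterates is critical for \<open>f\<close>. For a quadratic map every
  fibre is the zero set of a nonzero binary quadratic form: a critical point is the only point
  of its fibre, every fibre has at most two points, and a fibre without critical points has two.
  Hence the whole \<open>k\<close>-fold preimage of a critical value consists of critical points, and so does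
  that of the common image \<open>f(v\<^sub>1) = f(v\<^sub>2)\<close>, whose fibre is exactly \<open>{v\<^sub>1, v\<^sub>2}\<close>. Conversely, a point
  outside \<open>{v\<^sub>1, v\<^sub>2, f(v\<^sub>1)}\<close> always has a non-critical preimage again outside this set, and
  iterating gives a non-critical point of \<open>f^k\<close> in its \<open>k\<close>-fold preimage.
\<close>

section \<open>Derivatives in charts\<close>

definition chart_rep :: "(sphere \<Rightarrow> sphere) \<Rightarrow> sphere \<Rightarrow> complex \<Rightarrow> complex" where
  "chart_rep g z w = chart (g z) (g (chart_inv z w))"

definition chart_domain :: "sphere \<Rightarrow> sphere set" where
  "chart_domain a = {y. chart_inv a (chart a y) = y}"

text \<open>The locality condition makes chart representations compose: without it the chart at
  infinity would send both \<open>\<infinity>\<close> and \<open>0\<close> to \<open>0\<close>.\<close>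
definition has_chart_derivative :: "(sphere \<Rightarrow> sphere) \<Rightarrow> sphere \<Rightarrow> complex \<Rightarrow> bool" where
  "has_chart_derivative g z D \<longleftrightarrow> (chart_rep g z has_field_derivative D) (at (chart z z)) \<and>
     (\<forall>\<^sub>F w in nhds (chart z z). g (chart_inv z w) \<in> chart_domain (g z))"

lemma chart_inv_chart_self [simp]: "chart_inv z (chart z z) = z"
  by (cases z) (auto simp: chart_def chart_inv_def)

lemma crit_points_iff_chart_derivative_zero:
  assumes "has_chart_derivative g z D"
  shows "z \<in> crit_points g \<longleftrightarrow> D = 0"
proof -
  have "deriv (chart_rep g z) (chart z z) = D"
    using assms unfolding has_chart_derivative_def by (intro DERIV_imp_deriv) auto
  then show ?thesis unfolding crit_points_def chart_rep_def[abs_def] by auto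
qed

lemma has_chart_derivative_id: "has_chart_derivative id z 1"
proof -
  have "chart_rep id z = (\<lambda>w. w)"
    by (rule ext) (cases z, auto simp: chart_rep_def chart_def chart_inv_def)
  moreover have "\<forall>w. chart_inv z w \<in> chart_domain z"
    by (cases z) (auto simp: chart_domain_def chart_def chart_inv_def)
  ultimately show ?thesis unfolding has_chart_derivative_def by auto
qed

lemma has_chart_derivative_comp:
  assumes F: "has_chart_derivative F z D1" and G: "has_chart_derivative G (F z) D2"
  shows "has_chart_derivative (G \<circ> F) z (D2 * D1)"
proof -
  define w0 where "w0 = chart z z"
  define u0 where "u0 = chart (F z) (F z)"
  have dF: "(chart_rep F z has_field_derivative D1) (at w0)"
    and locF: "\<forall>\<^sub>F w in nhds w0. F (chart_inv z w) \<in> chart_domain (F z)"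
    using F unfolding has_chart_derivative_def w0_def by auto
  have dG: "(chart_rep G (F z) has_field_derivative D2) (at u0)"
    and locG: "\<forall>\<^sub>F u in nhds u0. G (chart_inv (F z) u) \<in> chart_domain (G (F z))"
    using G unfolding has_chart_derivative_def u0_def by auto
  have F_w0: "chart_rep F z w0 = u0" by (simp add: w0_def u0_def chart_rep_def)
  have "(chart_rep F z \<longlongrightarrow> u0) (nhds w0)"
    using DERIV_isCont[OF dF] F_w0 by (metis isCont_def tendsto_at_iff_tendsto_nhds)
  then have locGF: "\<forall>\<^sub>F w in nhds w0. G (chart_inv (F z) (chart_rep F z w)) \<in> chart_domain (G (F z))"
    using eventually_compose_filterlim[OF locG] by (simp add: filterlim_def)
  have ev: "\<forall>\<^sub>F w in nhds w0. chart_rep (G \<circ> F) z w = (chart_rep G (F z) \<circ> chart_rep F z) w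
      \<and> (G \<circ> F) (chart_inv z w) \<in> chart_domain ((G \<circ> F) z)"
    using locF locGF
  proof eventually_elim
    case (elim w)
    then have "chart_inv (F z) (chart (F z) (F (chart_inv z w))) = F (chart_inv z w)"
      by (simp add: chart_domain_def chart_rep_def)
    with elim(2) show ?case by (simp add: chart_rep_def)
  qed
  have "(chart_rep G (F z) \<circ> chart_rep F z has_field_derivative D2 * D1) (at w0)"
    using DERIV_chain[OF _ dF] dG F_w0 by simp
  moreover have ev_eq: "\<forall>\<^sub>F w in nhds w0.
      chart_rep (G \<circ> F) z w = (chart_rep G (F z) \<circ> chart_rep F z) w"
    using ev by (rule eventually_mono) auto
  ultimately have "(chart_rep (G \<circ> F) z has_field_derivative D2 * D1) (at w0)"
    using DERIV_cong_ev[OF refl ev_eq refl] by (simp add: comp_def)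
  then show ?thesis
    unfolding has_chart_derivative_def w0_def[symmetric] using ev by (auto elim: eventually_mono)
qed

lemma has_chart_derivative_funpow:
  assumes "\<And>z. \<exists>D. has_chart_derivative g z D"
  shows "\<exists>D. has_chart_derivative (g ^^ n) z D \<and> (D = 0 \<longleftrightarrow> (\<exists>j<n. (g ^^ j) z \<in> crit_points g))"
proof (induction n)
  case 0
  show ?case using has_chart_derivative_id[of z] by (auto simp: id_def)
next
  case (Suc n)
  obtain D1 where D1: "has_chart_derivative (g ^^ n) z D1"
    and D1_zero: "D1 = 0 \<longleftrightarrow> (\<exists>j<n. (g ^^ j) z \<in> crit_points g)"
    using Suc by blast
  obtain D2 where D2: "has_chart_derivative g ((g ^^ n) z) D2" using assms by blast
  have "has_chart_derivative (g ^^ Suc n) z (D2 * D1)"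
    using has_chart_derivative_comp[OF D1 D2] by simp
  moreover have "D2 * D1 = 0 \<longleftrightarrow> (\<exists>j<Suc n. (g ^^ j) z \<in> crit_points g)"
    using D1_zero crit_points_iff_chart_derivative_zero[OF D2] less_Suc_eq by auto
  ultimately show ?case by blast
qed

lemma crit_points_funpow:
  assumes "\<And>z. \<exists>D. has_chart_derivative g z D"
  shows "z \<in> crit_points (g ^^ n) \<longleftrightarrow> (\<exists>j<n. (g ^^ j) z \<in> crit_points g)"
  using has_chart_derivative_funpow[OF assms, of n z] crit_points_iff_chart_derivative_zero by blast

lemma quotient_chart_has_derivative:
  fixes G :: "complex \<Rightarrow> sphere" and A B :: "complex \<Rightarrow> complex"
  assumes dA: "(A has_field_derivative A') (at w0)" and dB: "(B has_field_derivative B') (at w0)"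
    and no_common_zero: "\<not> (A w0 = 0 \<and> B w0 = 0)"
    and G: "\<And>w. G w = (if B w = 0 then None else Some (A w / B w))"
  shows "((\<lambda>w. chart (G w0) (G w)) has_field_derivative
           (if B w0 \<noteq> 0 then (A' * B w0 - A w0 * B') / (B w0 * B w0) else B' / A w0)) (at w0)"
    and "\<forall>\<^sub>F w in nhds w0. G w \<in> chart_domain (G w0)"
proof -
  have cA: "(A \<longlongrightarrow> A w0) (nhds w0)" and cB: "(B \<longlongrightarrow> B w0) (nhds w0)"
    using DERIV_isCont[OF dA] DERIV_isCont[OF dB]
    by (metis isCont_def tendsto_at_iff_tendsto_nhds)+
  have "((\<lambda>w. chart (G w0) (G w)) has_field_derivative
           (if B w0 \<noteq> 0 then (A' * B w0 - A w0 * B') / (B w0 * B w0) else B' / A w0)) (at w0)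
       \<and> (\<forall>\<^sub>F w in nhds w0. G w \<in> chart_domain (G w0))"
  proof (cases "B w0 = 0")
    case False
    have ev: "\<forall>\<^sub>F w in nhds w0. B w \<noteq> 0" using cB False by (simp add: tendsto_imp_eventually_ne)
    have G0: "G w0 = Some (A w0 / B w0)" using G False by simp
    have ev_eq: "\<forall>\<^sub>F w in nhds w0. chart (G w0) (G w) = A w / B w" using ev
      by (rule eventually_mono) (simp only: G0, simp add: G chart_def)
    then have "((\<lambda>w. chart (G w0) (G w)) has_field_derivative
        (A' * B w0 - A w0 * B') / (B w0 * B w0)) (at w0)"
      using DERIV_cong_ev[OF refl ev_eq refl] DERIV_divide[OF dA dB False] by simp
    moreover have "\<forall>\<^sub>F w in nhds w0. G w \<in> chart_domain (G w0)" using ev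
      by (rule eventually_mono) (simp only: G0, simp add: G chart_domain_def chart_def chart_inv_def)
    ultimately show ?thesis using False by simp
  next
    case True
    then have A0: "A w0 \<noteq> 0" using no_common_zero by simp
    have ev: "\<forall>\<^sub>F w in nhds w0. A w \<noteq> 0" using cA A0 by (simp add: tendsto_imp_eventually_ne)
    have G0: "G w0 = None" using G True by simp
    have ev_eq: "\<forall>\<^sub>F w in nhds w0. chart (G w0) (G w) = B w / A w" using ev
      by (rule eventually_mono) (simp only: G0, simp add: G chart_def)
    moreover have "(B' * A w0 - B w0 * A') / (A w0 * A w0) = B' / A w0"
      using True A0 by (simp add: field_simps)
    ultimately have "((\<lambda>w. chart (G w0) (G w)) has_field_derivative B' / A w0) (at w0)"
      using DERIV_cong_ev[OF refl ev_eq refl] DERIV_divide[OF dB dA A0] by simp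
    moreover have "\<forall>\<^sub>F w in nhds w0. G w \<in> chart_domain (G w0)" using ev
      by (rule eventually_mono) (simp only: G0, simp add: G chart_domain_def chart_def chart_inv_def)
    ultimately show ?thesis using True by simp
  qed
  then show "((\<lambda>w. chart (G w0) (G w)) has_field_derivative
           (if B w0 \<noteq> 0 then (A' * B w0 - A w0 * B') / (B w0 * B w0) else B' / A w0)) (at w0)"
    and "\<forall>\<^sub>F w in nhds w0. G w \<in> chart_domain (G w0)" by auto
qed

lemma quadratic_has_field_derivative:
  "((\<lambda>w. c0 + c1*w + c2*w^2) has_field_derivative (c1 + 2*c2*a)) (at a)"
  by (auto intro!: derivative_eq_intros)

section \<open>Zeros of binary quadratic forms\<close>

text \<open>\<open>quad_zero r0 r1 r2\<close> and \<open>quad_crit r0 r1 r2\<close> describe the zeros of the binary form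
  \<open>r0 Y\<^sup>2 + r1 XY + r2 X\<^sup>2\<close> on the sphere and the vanishing of its derivative there; a zero that is
  also critical is a double zero. \<open>None\<close> is a zero exactly when the form has degree below 2.\<close>

definition quad_zero :: "complex \<Rightarrow> complex \<Rightarrow> complex \<Rightarrow> sphere \<Rightarrow> bool" where
  "quad_zero r0 r1 r2 z = (case z of Some a \<Rightarrow> r0 + r1*a + r2*a^2 = 0 | None \<Rightarrow> r2 = 0)"

definition quad_crit :: "complex \<Rightarrow> complex \<Rightarrow> complex \<Rightarrow> sphere \<Rightarrow> bool" where
  "quad_crit r0 r1 r2 z = (case z of Some a \<Rightarrow> r1 + 2*r2*a = 0 | None \<Rightarrow> r1 = 0)"

lemma quad_zero_unique_if_crit:
  assumes nz: "\<not> (r0 = 0 \<and> r1 = 0 \<and> r2 = 0)"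
    and "quad_zero r0 r1 r2 z" "quad_crit r0 r1 r2 z" "quad_zero r0 r1 r2 z'"
  shows "z' = z"
proof (cases z)
  case None
  then show ?thesis using assms by (cases z') (auto simp: quad_zero_def quad_crit_def)
next
  case (Some a)
  have za: "r0 + r1*a + r2*a^2 = 0" and ca: "r1 + 2*r2*a = 0"
    using assms Some by (auto simp: quad_zero_def quad_crit_def)
  then have r2: "r2 \<noteq> 0" using nz by auto
  show ?thesis
  proof (cases z')
    case None then show ?thesis using assms r2 by (auto simp: quad_zero_def)
  next
    case (Some b)
    then have "r0 + r1*b + r2*b^2 = 0" using assms by (auto simp: quad_zero_def)
    then have "r2 * (b - a)^2 = 0" using za ca by algebra
    then show ?thesis using r2 Some \<open>z = Some a\<close> by simp
  qed
qed

lemma quad_zero_at_most_two: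
  assumes nz: "\<not> (r0 = 0 \<and> r1 = 0 \<and> r2 = 0)"
  shows "\<exists>u v. \<forall>z. quad_zero r0 r1 r2 z \<longrightarrow> z = u \<or> z = v"
proof (cases "r2 = 0")
  case True
  have "z = None \<or> z = Some (- r0 / r1)" if "quad_zero r0 r1 r2 z" for z
  proof (cases z)
    case (Some a)
    then have "r0 + r1*a = 0" using that True by (simp add: quad_zero_def)
    moreover from this have "r1 \<noteq> 0" using nz True by auto
    ultimately show ?thesis using Some by (simp add: field_simps add_eq_0_iff)
  qed simp
  then show ?thesis by blast
next
  case False
  show ?thesis
  proof (cases "\<exists>a. r0 + r1*a + r2*a^2 = 0")
    case True
    then obtain a where za: "r0 + r1*a + r2*a^2 = 0" by blast
    have "z = Some a \<or> z = Some (- r1 / r2 - a)" if "quad_zero r0 r1 r2 z" for z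
    proof (cases z)
      case None then show ?thesis using that False by (simp add: quad_zero_def)
    next
      case (Some b)
      then have "r0 + r1*b + r2*b^2 = 0" using that by (auto simp: quad_zero_def)
      then have "(b - a) * (r1 + r2*(a+b)) = 0" using za by algebra
      moreover have "r1 + r2*(a+b) = 0 \<Longrightarrow> b = - r1 / r2 - a" using False
        by (simp add: field_simps) (metis add.commute add_eq_0_iff distrib_left)
      ultimately show ?thesis using Some by auto
    qed
    then show ?thesis by blast
  next
    case False
    then have "quad_zero r0 r1 r2 z \<Longrightarrow> z = None" for z
      using \<open>r2 \<noteq> 0\<close> by (cases z) (auto simp: quad_zero_def)
    then show ?thesis by blast
  qed
qed

lemma quad_two_zeros_if_no_crit:
  assumes nz: "\<not> (r0 = 0 \<and> r1 = 0 \<and> r2 = 0)"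
    and simple: "\<forall>z. quad_zero r0 r1 r2 z \<longrightarrow> \<not> quad_crit r0 r1 r2 z"
  shows "\<exists>u v. u \<noteq> v \<and> quad_zero r0 r1 r2 u \<and> quad_zero r0 r1 r2 v"
proof (cases "r2 = 0")
  case True
  then have "quad_zero r0 r1 r2 None" by (simp add: quad_zero_def)
  moreover from this have "r1 \<noteq> 0" using simple by (auto simp: quad_crit_def)
  then have "quad_zero r0 r1 r2 (Some (- r0 / r1))" using True by (simp add: quad_zero_def field_simps)
  ultimately show ?thesis by blast
next
  case False
  define s where "s = csqrt (r1^2 - 4*r2*r0)"
  have s2: "s^2 = r1^2 - 4*r2*r0" by (simp add: s_def)
  define a where "a = (- r1 + s) / (2*r2)"
  define b where "b = (- r1 - s) / (2*r2)"
  have a2: "2*r2*a = - r1 + s" and b2: "2*r2*b = - r1 - s"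
    using False by (simp_all add: a_def b_def field_simps)
  have "4*r2*(r0 + r1*a + r2*a^2) = 0" "4*r2*(r0 + r1*b + r2*b^2) = 0"
    using a2 b2 s2 by algebra+
  then have za: "quad_zero r0 r1 r2 (Some a)" and zb: "quad_zero r0 r1 r2 (Some b)"
    using False by (auto simp: quad_zero_def)
  have "s \<noteq> 0" using simple za a2 by (auto simp: quad_crit_def)
  then have "a \<noteq> b" using a2 b2 by auto
  then show ?thesis using za zb by blast
qed

section \<open>Quadratic rational maps in coefficient form\<close>

locale quadratic_coeff_map =
  fixes f :: "sphere \<Rightarrow> sphere" and p0 p1 p2 q0 q1 q2 :: complex
  assumes f_Some: "\<And>a. f (Some a) = (if q0 + q1*a + q2*a^2 = 0 then None
                  else Some ((p0 + p1*a + p2*a^2) / (q0 + q1*a + q2*a^2)))"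
    and f_None: "f None = (if q2 = 0 then None else Some (p2 / q2))"
    and no_common_zero: "\<And>a. \<not> (p0 + p1*a + p2*a^2 = 0 \<and> q0 + q1*a + q2*a^2 = 0)"
    and degree_two: "p2 \<noteq> 0 \<or> q2 \<noteq> 0"
    and not_constant: "\<And>c. \<not> (p0 = c*q0 \<and> p1 = c*q1 \<and> p2 = c*q2)"
    and den_nonzero: "\<not> (q0 = 0 \<and> q1 = 0 \<and> q2 = 0)"
begin

definition num :: "complex \<Rightarrow> complex" where "num a = p0 + p1*a + p2*a^2"
definition den :: "complex \<Rightarrow> complex" where "den a = q0 + q1*a + q2*a^2"

lemma f_Some_num_den: "f (Some a) = (if den a = 0 then None else Some (num a / den a))"
  using f_Some by (simp add: num_def den_def)

definition chart_deriv_Some :: "complex \<Rightarrow> complex" where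
  "chart_deriv_Some a = (if den a \<noteq> 0
     then ((p1 + 2*p2*a) * den a - num a * (q1 + 2*q2*a)) / (den a * den a)
     else (q1 + 2*q2*a) / num a)"

lemma has_chart_derivative_Some: "has_chart_derivative f (Some a) (chart_deriv_Some a)"
proof -
  have dP: "(num has_field_derivative (p1 + 2*p2*a)) (at a)"
    and dQ: "(den has_field_derivative (q1 + 2*q2*a)) (at a)"
    unfolding num_def[abs_def] den_def[abs_def] by (rule quadratic_has_field_derivative)+
  have nz: "\<not> (num a = 0 \<and> den a = 0)" using no_common_zero by (simp add: num_def den_def)
  have e: "chart_rep f (Some a) = (\<lambda>w. chart (f (Some a)) (f (Some w)))"
    by (rule ext) (simp add: chart_rep_def chart_inv_def)
  show ?thesis unfolding has_chart_derivative_def e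
    using quotient_chart_has_derivative[OF dP dQ nz f_Some_num_den]
    by (simp add: chart_def chart_inv_def chart_deriv_Some_def)
qed

definition chart_deriv_None :: complex where
  "chart_deriv_None = (if q2 \<noteq> 0 then (p1 * q2 - p2 * q1) / (q2 * q2) else q1 / p2)"

text \<open>In the chart \<open>w = 1/z\<close> the map is the quotient of the reversed polynomials.\<close>
lemma has_chart_derivative_None: "has_chart_derivative f None chart_deriv_None"
proof -
  define A where "A w = p2 + p1*w + p0*w^2" for w
  define B where "B w = q2 + q1*w + q0*w^2" for w
  have G: "f (chart_inv None w) = (if B w = 0 then None else Some (A w / B w))" for w
  proof (cases "w = 0")
    case True then show ?thesis by (simp add: chart_inv_def f_None A_def B_def)
  next
    case False
    have "q0 + q1 / w + q2 * (1 / w)^2 = B w / w^2" "p0 + p1 / w + p2 * (1 / w)^2 = A w / w^2"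
      using False by (simp_all add: A_def B_def field_simps power2_eq_square)
    then show ?thesis using False by (simp add: chart_inv_def f_Some)
  qed
  have dA: "(A has_field_derivative (p1 + 2*p0*0)) (at 0)"
    and dB: "(B has_field_derivative (q1 + 2*q0*0)) (at 0)"
    unfolding A_def[abs_def] B_def[abs_def] by (rule quadratic_has_field_derivative)+
  have nz: "\<not> (A 0 = 0 \<and> B 0 = 0)" using degree_two by (simp add: A_def B_def)
  note L = quotient_chart_has_derivative[OF dA dB nz, of "\<lambda>w. f (chart_inv None w)", OF G]
  have e: "chart_rep f None = (\<lambda>w. chart (f (chart_inv None 0)) (f (chart_inv None w)))"
    by (rule ext) (simp add: chart_rep_def chart_inv_def)
  have D: "(if B 0 \<noteq> 0 then ((p1 + 2*p0*0) * B 0 - A 0 * (q1 + 2*q0*0)) / (B 0 * B 0)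
      else (q1 + 2*q0*0) / A 0) = chart_deriv_None" by (simp add: A_def B_def chart_deriv_None_def)
  show ?thesis unfolding has_chart_derivative_def e using L[unfolded D]
    by (simp add: chart_inv_def chart_def)
qed

lemma has_chart_derivative_everywhere: "\<exists>D. has_chart_derivative f z D"
  using has_chart_derivative_Some has_chart_derivative_None by (cases z) auto

text \<open>The fibre over \<open>y\<close> is the zero set of the form \<open>p - y q\<close> (of \<open>q\<close> when \<open>y = \<infinity>\<close>).\<close>
definition fibre_coeff0 where "fibre_coeff0 y = (case y of Some c \<Rightarrow> p0 - c*q0 | None \<Rightarrow> q0)"
definition fibre_coeff1 where "fibre_coeff1 y = (case y of Some c \<Rightarrow> p1 - c*q1 | None \<Rightarrow> q1)"
definition fibre_coeff2 where "fibre_coeff2 y = (case y of Some c \<Rightarrow> p2 - c*q2 | None \<Rightarrow> q2)"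

abbreviation fibre_zero :: "sphere \<Rightarrow> sphere \<Rightarrow> bool" where
  "fibre_zero y \<equiv> quad_zero (fibre_coeff0 y) (fibre_coeff1 y) (fibre_coeff2 y)"

abbreviation fibre_crit :: "sphere \<Rightarrow> sphere \<Rightarrow> bool" where
  "fibre_crit y \<equiv> quad_crit (fibre_coeff0 y) (fibre_coeff1 y) (fibre_coeff2 y)"

lemma fibre_coeffs_nonzero: "\<not> (fibre_coeff0 y = 0 \<and> fibre_coeff1 y = 0 \<and> fibre_coeff2 y = 0)"
  using not_constant den_nonzero by (cases y) (auto simp: fibre_coeff0_def fibre_coeff1_def fibre_coeff2_def)

lemma f_eq_iff_fibre_zero: "f z = y \<longleftrightarrow> fibre_zero y z"
proof (cases z)
  case None
  then show ?thesis using degree_two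
    by (cases y) (auto simp: f_None quad_zero_def fibre_coeff0_def fibre_coeff1_def fibre_coeff2_def field_simps)
next
  case (Some a)
  have np: "den a = 0 \<Longrightarrow> num a \<noteq> 0" using no_common_zero by (auto simp: num_def den_def)
  show ?thesis
  proof (cases y)
    case None then show ?thesis
      using Some by (simp add: f_Some_num_den quad_zero_def fibre_coeff0_def fibre_coeff1_def
          fibre_coeff2_def den_def)
  next
    case (Some c)
    have "(p0 - c*q0) + (p1 - c*q1)*a + (p2 - c*q2)*a^2 = num a - c * den a"
      by (simp add: num_def den_def algebra_simps)
    moreover have "f (Some a) = Some c \<longleftrightarrow> num a - c * den a = 0"
      using np by (auto simp: f_Some_num_den field_simps)
    ultimately show ?thesis using \<open>z = Some a\<close> Some
      by (simp add: quad_zero_def fibre_coeff0_def fibre_coeff1_def fibre_coeff2_def)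
  qed
qed

lemma crit_points_None_iff: "None \<in> crit_points f \<longleftrightarrow> fibre_crit (f None) None"
proof -
  have crit: "None \<in> crit_points f \<longleftrightarrow> chart_deriv_None = 0"
    by (rule crit_points_iff_chart_derivative_zero[OF has_chart_derivative_None])
  show ?thesis
  proof (cases "q2 = 0")
    case True
    then have "p2 \<noteq> 0" using degree_two by simp
    moreover have "chart_deriv_None = q1 / p2" unfolding chart_deriv_None_def using True by simp
    ultimately show ?thesis using crit True by (simp add: f_None quad_crit_def fibre_coeff1_def)
  next
    case False
    then have "chart_deriv_None = 0 \<longleftrightarrow> p1 - p2 / q2 * q1 = 0"
      by (simp add: chart_deriv_None_def field_simps)
    then show ?thesis using crit False by (simp add: f_None quad_crit_def fibre_coeff1_def)
  qed
qed

lemma crit_points_Some_iff: "Some a \<in> crit_points f \<longleftrightarrow> fibre_crit (f (Some a)) (Some a)"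
proof -
  have crit: "Some a \<in> crit_points f \<longleftrightarrow> chart_deriv_Some a = 0"
    by (rule crit_points_iff_chart_derivative_zero[OF has_chart_derivative_Some])
  show ?thesis
  proof (cases "den a = 0")
    case True
    then have "num a \<noteq> 0" using no_common_zero by (auto simp: num_def den_def)
    then show ?thesis using crit True
      by (simp add: chart_deriv_Some_def f_Some_num_den quad_crit_def fibre_coeff1_def fibre_coeff2_def)
  next
    case False
    define P' where "P' = p1 + 2*p2*a"
    define Q' where "Q' = q1 + 2*q2*a"
    have "chart_deriv_Some a = 0 \<longleftrightarrow> P' * den a - num a * Q' = 0"
      using False by (simp add: chart_deriv_Some_def P'_def Q'_def)
    also have "\<dots> \<longleftrightarrow> P' - num a / den a * Q' = 0"
      using False by (simp add: field_simps)
    also have "P' - num a / den a * Q' = (p1 - num a / den a * q1) + 2 * (p2 - num a / den a * q2) * a"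
      by (simp add: P'_def Q'_def algebra_simps add_divide_distrib)
    finally show ?thesis using crit False
      by (simp add: f_Some_num_den quad_crit_def fibre_coeff1_def fibre_coeff2_def)
  qed
qed

lemma crit_points_iff_fibre_crit: "z \<in> crit_points f \<longleftrightarrow> fibre_crit (f z) z"
  using crit_points_None_iff crit_points_Some_iff by (cases z) auto

lemma crit_point_unique_preimage: "z \<in> crit_points f \<Longrightarrow> f z' = f z \<Longrightarrow> z' = z"
  using quad_zero_unique_if_crit[OF fibre_coeffs_nonzero, of "f z" z z']
    f_eq_iff_fibre_zero[of z "f z"] f_eq_iff_fibre_zero[of z' "f z"] crit_points_iff_fibre_crit[of z]
  by auto

lemma preimage_crit_value_crit: "x \<in> crit_values f \<Longrightarrow> f z = x \<Longrightarrow> z \<in> crit_points f"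
  unfolding crit_values_def using crit_point_unique_preimage by blast

lemma fibre_at_most_two: "\<exists>u v. \<forall>z. f z = y \<longrightarrow> z = u \<or> z = v"
  using quad_zero_at_most_two[OF fibre_coeffs_nonzero, of y] by (simp add: f_eq_iff_fibre_zero)

lemma two_preimages_if_no_crit:
  assumes "\<forall>z. f z = y \<longrightarrow> z \<notin> crit_points f"
  shows "\<exists>u v. u \<noteq> v \<and> f u = y \<and> f v = y"
proof -
  have "\<forall>z. fibre_zero y z \<longrightarrow> \<not> fibre_crit y z"
    using assms crit_points_iff_fibre_crit by (auto simp: f_eq_iff_fibre_zero[symmetric])
  from quad_two_zeros_if_no_crit[OF fibre_coeffs_nonzero this] show ?thesis
    by (simp add: f_eq_iff_fibre_zero)
qed

section \<open>Iterated preimages\<close>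

context
  fixes v1 v2 :: sphere
  assumes crit_values: "crit_values f = {v1, v2}" and v1_neq_v2: "v1 \<noteq> v2"
    and coalescing: "f v1 = f v2"
begin

lemma fibre_of_coalesced_value: "f z = f v1 \<Longrightarrow> z = v1 \<or> z = v2"
  using fibre_at_most_two[of "f v1"] v1_neq_v2 coalescing by metis

lemma crit_points_funpow_iff: "z \<in> crit_points (f ^^ n) \<longleftrightarrow> (\<exists>j<n. (f ^^ j) z \<in> crit_points f)"
  by (rule crit_points_funpow[OF has_chart_derivative_everywhere])

lemma funpow_preimage_exceptional_crit:
  assumes "x \<in> crit_values f \<union> {f v1}" and "k \<ge> 2" and "(f ^^ k) y = x"
  shows "y \<in> crit_points (f ^^ k)"
proof -
  obtain m where k: "k = Suc (Suc m)" using \<open>k \<ge> 2\<close> by (cases k; cases "k - 1") auto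
  have fy: "f ((f ^^ Suc m) y) = x" and fy': "f ((f ^^ m) y) = (f ^^ Suc m) y"
    using assms(3) k by simp_all
  have "(f ^^ Suc m) y \<in> crit_points f \<or> (f ^^ m) y \<in> crit_points f"
  proof (cases "x \<in> crit_values f")
    case True
    then show ?thesis using preimage_crit_value_crit[OF True fy] by blast
  next
    case False
    then have "f ((f ^^ Suc m) y) = f v1" using assms(1) fy by blast
    then have "(f ^^ Suc m) y \<in> {v1, v2}" using fibre_of_coalesced_value by blast
    then have "f ((f ^^ m) y) \<in> crit_values f" unfolding fy' crit_values .
    then show ?thesis using preimage_crit_value_crit by blast
  qed
  moreover have "Suc m < k" "m < k" using k by simp_all
  ultimately show ?thesis unfolding crit_points_funpow_iff by blast
qed

lemma noncrit_preimage_outside_exceptional: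
  assumes "x \<notin> crit_values f \<union> {f v1}"
  obtains x' where "x' \<notin> crit_values f \<union> {f v1}" "f x' = x" "x' \<notin> crit_points f"
proof -
  have no_crit: "\<forall>z. f z = x \<longrightarrow> z \<notin> crit_points f"
    using assms unfolding crit_values_def by blast
  have not_crit_value: "z \<notin> crit_values f" if "f z = x" for z
    using that assms coalescing unfolding crit_values by auto
  obtain u v where uv: "u \<noteq> v" "f u = x" "f v = x"
    using two_preimages_if_no_crit[OF no_crit] by blast
  then have "u \<notin> crit_values f \<union> {f v1} \<or> v \<notin> crit_values f \<union> {f v1}"
    using not_crit_value by blast
  then show ?thesis using uv no_crit that by blast
qed

lemma funpow_noncrit_preimage:
  assumes "x \<notin> crit_values f \<union> {f v1}"
  shows "\<exists>y. (f ^^ n) y = x \<and> y \<notin> crit_points (f ^^ n)"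
proof -
  have "\<exists>y. y \<notin> crit_values f \<union> {f v1} \<and> (f ^^ n) y = x \<and> (\<forall>j<n. (f ^^ j) y \<notin> crit_points f)"
    using assms
  proof (induction n arbitrary: x)
    case 0 then show ?case by auto
  next
    case (Suc n)
    obtain x' where x': "x' \<notin> crit_values f \<union> {f v1}" "f x' = x" "x' \<notin> crit_points f"
      using noncrit_preimage_outside_exceptional[OF Suc.prems] by blast
    obtain y where y: "y \<notin> crit_values f \<union> {f v1}" "(f ^^ n) y = x'"
        "\<forall>j<n. (f ^^ j) y \<notin> crit_points f"
      using Suc.IH[OF x'(1)] by blast
    have "(f ^^ Suc n) y = x" using y(2) x'(2) by simp
    moreover have "\<forall>j<Suc n. (f ^^ j) y \<notin> crit_points f" using y(2,3) x'(3) less_Suc_eq by auto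
    ultimately show ?case using y(1) by blast
  qed
  then show ?thesis unfolding crit_points_funpow_iff by blast
qed

end

end

section \<open>From polynomials to coefficients\<close>

lemma poly_eq_if_coeffs_012:
  fixes p r :: "'a::zero poly"
  assumes "degree p \<le> 2" "degree r \<le> 2"
    and "coeff p 0 = coeff r 0" "coeff p 1 = coeff r 1" "coeff p 2 = coeff r 2"
  shows "p = r"
proof (rule poly_eqI)
  fix n
  show "coeff p n = coeff r n"
  proof (cases "n \<le> 2")
    case True
    then have "n = 0 \<or> n = 1 \<or> n = 2" by auto
    then show ?thesis using assms(3-5) by (elim disjE) simp_all
  next
    case False
    then show ?thesis using assms(1,2) by (simp add: coeff_eq_0)
  qed
qed

lemma poly_degree_le_2:
  fixes p :: "complex poly"
  assumes "degree p \<le> 2"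
  shows "poly p a = coeff p 0 + coeff p 1 * a + coeff p 2 * a^2"
proof -
  have "p = [:coeff p 0, coeff p 1, coeff p 2:]"
    using assms by (intro poly_eq_if_coeffs_012) (auto simp: degree_pCons_le numeral_2_eq_2)
  then have "poly p a = poly [:coeff p 0, coeff p 1, coeff p 2:] a" by simp
  then show ?thesis by (simp add: algebra_simps power2_eq_square)
qed

lemma quadratic_rational_map_coeff_map:
  assumes "quadratic_rational_map f"
  shows "\<exists>p0 p1 p2 q0 q1 q2. quadratic_coeff_map f p0 p1 p2 q0 q1 q2"
proof -
  obtain p q where q: "q \<noteq> 0" and cop: "coprime p q" and deg: "max (degree p) (degree q) = 2"
    and f: "f = rat_map p q"
    using assms unfolding quadratic_rational_map_def by blast
  have dp: "degree p \<le> 2" and dq: "degree q \<le> 2" using deg by auto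
  note pp = poly_degree_le_2[OF dp] and qq = poly_degree_le_2[OF dq]
  have no_common_zero: "\<not> (poly p a = 0 \<and> poly q a = 0)" for a
  proof
    assume "poly p a = 0 \<and> poly q a = 0"
    then have "[:-a, 1:] dvd p" "[:-a, 1:] dvd q" by (auto simp: poly_eq_0_iff_dvd)
    then have "is_unit [:-a, 1:]" by (rule coprime_common_divisor[OF cop])
    then show False using is_unit_iff_degree[of "[:-a, 1:]"] by simp
  qed
  have lead_p: "coeff p 2 \<noteq> 0" if "degree p = 2"
    using that leading_coeff_neq_0[of p] by (cases "p = 0") auto
  have lead_q: "coeff q 2 \<noteq> 0 \<longleftrightarrow> degree q = 2"
    using dq le_degree[of q 2] leading_coeff_neq_0[OF q] by (metis le_antisym)
  have degree_two: "coeff p 2 \<noteq> 0 \<or> coeff q 2 \<noteq> 0"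
    using deg lead_p lead_q by (auto simp: max_def split: if_splits)
  have not_constant: "\<not> (coeff p 0 = c * coeff q 0 \<and> coeff p 1 = c * coeff q 1 \<and> coeff p 2 = c * coeff q 2)"
    for c
  proof
    assume "coeff p 0 = c * coeff q 0 \<and> coeff p 1 = c * coeff q 1 \<and> coeff p 2 = c * coeff q 2"
    then have pq: "p = smult c q"
      using dp dq degree_smult_le[of c q] by (intro poly_eq_if_coeffs_012) auto
    then have "is_unit q" using coprime_common_divisor[OF cop _ dvd_refl] dvd_smult[OF dvd_refl[of q]] by simp
    then have "degree q = 0" using is_unit_iff_degree[OF q] by simp
    then show False using deg pq degree_smult_le[of c q] by simp
  qed
  have den_nonzero: "\<not> (coeff q 0 = 0 \<and> coeff q 1 = 0 \<and> coeff q 2 = 0)"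
    using q dq poly_eq_if_coeffs_012[of q 0] by auto
  have f_None: "f None = (if coeff q 2 = 0 then None else Some (coeff p 2 / coeff q 2))"
    using lead_q deg dp dq f by (auto simp: rat_map_def max_def split: if_splits)
  have "quadratic_coeff_map f (coeff p 0) (coeff p 1) (coeff p 2) (coeff q 0) (coeff q 1) (coeff q 2)"
    using f_None no_common_zero degree_two not_constant den_nonzero
    by unfold_locales (simp_all add: f rat_map_def pp qq)
  then show ?thesis by blast
qed

theorem mainTheorem9:
  fixes f :: "sphere \<Rightarrow> sphere" and v1 v2 :: sphere and k :: nat
  assumes "quadratic_rational_map f"
    and "crit_values f = {v1, v2}" and "v1 \<noteq> v2"
    and "f v1 = f v2"
    and "k \<ge> 2"
  shows "\<forall>x. x \<in> crit_values f \<union> {f v1} \<longleftrightarrow> (f ^^ k) -` {x} \<subseteq> crit_points (f ^^ k)"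
proof
  fix x
  obtain p0 p1 p2 q0 q1 q2 where "quadratic_coeff_map f p0 p1 p2 q0 q1 q2"
    using quadratic_rational_map_coeff_map[OF assms(1)] by blast
  note exceptional = quadratic_coeff_map.funpow_preimage_exceptional_crit[OF this assms(2-4)]
    and generic = quadratic_coeff_map.funpow_noncrit_preimage[OF this assms(2-4)]
  show "x \<in> crit_values f \<union> {f v1} \<longleftrightarrow> (f ^^ k) -` {x} \<subseteq> crit_points (f ^^ k)"
  proof
    assume "x \<in> crit_values f \<union> {f v1}"
    then show "(f ^^ k) -` {x} \<subseteq> crit_points (f ^^ k)" using exceptional[OF _ assms(5)] by blast
  next
    assume "(f ^^ k) -` {x} \<subseteq> crit_points (f ^^ k)"
    then show "x \<in> crit_values f \<union> {f v1}" using generic[of x k] by blast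
  qed
qed

end
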